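(* Let $(Q,\mathcal Q)$, $(\Delta,\mathcal D)$ be measurable spaces, $f:Q\to Q$ and $g:Q\to\Delta$ measurable, and let $T$ be the generator with $T(x,\cdot)=\delta_{(f(x),g(f(x)))}$ (i.e. $T(x,A\times B)=1$ if $f(x)\in A$ and $g(f(x))\in B$, and $0$ otherwise). Then for $x_1,x_2\in Q$ the following are equivalent: (i) $G_T(\delta_{x_1})=G_T(\delta_{x_2})$; (ii) $T(x_1,C)=T(x_2,C)$ for all $C\in\sigma_Q(T)\otimes\mathcal D$.
   Context: A generator $[(Q,\mathcal Q),T,(\Delta,\mathcal D)]$ consists of measurable spaces $(Q,\mathcal Q)$ and $(\Delta,\mathcal D)$ and a Markov transition kernel $T$ from $(Q,\mathcal Q)$ to $(Q\times\Delta,\mathcal Q\otimes\mathcal D)$. For a probability measure $\mu$ on $(Q,\mathcal Q)$, $G_T(\mu)$ is the unique probability measure on $(\Delta^{\mathbb N},\mathcal D^{\mathbb N})$ whose finite-dimensional marginals are $P_n^{\mu,T}(B_1\times\cdots\times B_n):=\int_Q\int_{Q\times B_1}\cdots\int_{Q\times B_n}T(x_{n-1},d(x_n,y_n))\cdots T(x_0,d(x_1,y_1))\,\mu(dx_0)$; $\delta_x$ is the Dirac measure at $x$. $\sigma_Q(T)$ denotes the smallest $\sigma$-subalgebra $\mathcal A$ of $\mathcal Q$ such that for every $C\in\mathcal A\otimes\mathcal D$ the function $x\mapsto T(x,C)$ is $\mathcal A$-measurable. *)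

theory Defs
  imports "HOL-Probability.Probability"
begin

definition is_generator :: "'q measure \<Rightarrow> ('q \<Rightarrow> ('q \<times> 'd) measure) \<Rightarrow> 'd measure \<Rightarrow> bool" where
  "is_generator Q T D \<longleftrightarrow> T \<in> Q \<rightarrow>\<^sub>M prob_algebra (Q \<Otimes>\<^sub>M D)"

text \<open>Iterated integral: W n B x = probability, starting in state x, that y_1 in B 0, ..., y_n in B (n-1).
  The outermost integral is w.r.t. T(x_0, d(x_1,y_1)) over Q x B_1, as in P_n.\<close>
primrec gen_W :: "'q set \<Rightarrow> ('q \<Rightarrow> ('q \<times> 'd) measure) \<Rightarrow> nat \<Rightarrow> (nat \<Rightarrow> 'd set) \<Rightarrow> 'q \<Rightarrow> ennreal" where
  "gen_W S T 0 B x = 1"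
| "gen_W S T (Suc n) B x =
     (\<integral>\<^sup>+ z. indicator (S \<times> B 0) z * gen_W S T n (\<lambda>i. B (Suc i)) (fst z) \<partial>(T x))"

text \<open>Finite-dimensional marginal P_n^{mu,T}(B_1 x ... x B_n) (index shifted: B i stands for B_{i+1}).\<close>
definition gen_P :: "'q measure \<Rightarrow> ('q \<Rightarrow> ('q \<times> 'd) measure) \<Rightarrow> 'q measure \<Rightarrow> nat \<Rightarrow> (nat \<Rightarrow> 'd set) \<Rightarrow> ennreal" where
  "gen_P Q T \<mu> n B = (\<integral>\<^sup>+ x. gen_W (space Q) T n B x \<partial>\<mu>)"

definition G_T :: "'q measure \<Rightarrow> ('q \<Rightarrow> ('q \<times> 'd) measure) \<Rightarrow> 'd measure \<Rightarrow> 'q measure \<Rightarrow> (nat \<Rightarrow> 'd) measure" where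
  "G_T Q T D \<mu> = (THE P. prob_space P \<and> sets P = sets (\<Pi>\<^sub>M i\<in>(UNIV::nat set). D) \<and>
      (\<forall>n B. (\<forall>i<n. B i \<in> sets D) \<longrightarrow>
         emeasure P {\<omega> \<in> space (\<Pi>\<^sub>M i\<in>(UNIV::nat set). D). \<forall>i<n. \<omega> i \<in> B i} = gen_P Q T \<mu> n B))"

definition sigma_admissible :: "'q measure \<Rightarrow> ('q \<Rightarrow> ('q \<times> 'd) measure) \<Rightarrow> 'd measure \<Rightarrow> 'q set set \<Rightarrow> bool" where
  "sigma_admissible Q T D A \<longleftrightarrow> sigma_algebra (space Q) A \<and> A \<subseteq> sets Q \<and>
     (\<forall>C \<in> sets (sigma (space Q) A \<Otimes>\<^sub>M D).
        (\<lambda>x. emeasure (T x) C) \<in> borel_measurable (sigma (space Q) A))"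

definition sigma_Q :: "'q measure \<Rightarrow> ('q \<Rightarrow> ('q \<times> 'd) measure) \<Rightarrow> 'd measure \<Rightarrow> 'q set set" where
  "sigma_Q Q T D = (THE A. sigma_admissible Q T D A \<and> (\<forall>A'. sigma_admissible Q T D A' \<longrightarrow> A \<subseteq> A'))"

end

theory Submission
  imports Defs
begin

text \<open>
  As \<open>T\<close> is deterministic, the chain started in \<open>x\<close> emits the fixed sequence
  \<open>\<omega>(x) = (g (f\<^bsup>i+1\<^esup> x))\<^sub>i\<close>, so \<open>G\<^sub>T(\<delta>\<^sub>x)\<close> is the Dirac measure at \<open>\<omega>(x)\<close> and (i) says
  that no coordinate set separates \<open>\<omega>(x\<^sub>1)\<close> from \<open>\<omega>(x\<^sub>2)\<close>.
  A sub-\<open>\<sigma>\<close>-algebra \<open>A\<close> is admissible iff \<open>x \<mapsto> (f x, g (f x))\<close> is \<open>A\<close>/\<open>A \<otimes> \<D>\<close>-measurable,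
  so \<open>\<sigma>\<^sub>Q(T)\<close> is the \<open>\<sigma>\<close>-algebra generated by the maps \<open>g \<circ> f\<^bsup>i+1\<^esup>\<close>. Since \<open>T(x,\<cdot>)\<close> is the
  Dirac measure at \<open>(f x, g (f x))\<close>, (ii) says that no set of \<open>\<sigma>\<^sub>Q(T) \<otimes> \<D>\<close> separates these
  points for \<open>x\<^sub>1\<close> and \<open>x\<^sub>2\<close>; testing on generators, this is again coordinatewise agreement
  of \<open>\<omega>(x\<^sub>1)\<close> and \<open>\<omega>(x\<^sub>2)\<close>.
\<close>

lemma sigma_sets_points_agree_iff:
  assumes "x \<in> \<Omega>" "y \<in> \<Omega>"
  shows "(\<forall>A\<in>sigma_sets \<Omega> G. x \<in> A \<longleftrightarrow> y \<in> A) \<longleftrightarrow> (\<forall>A\<in>G. x \<in> A \<longleftrightarrow> y \<in> A)"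
proof
  assume agree: "\<forall>A\<in>G. x \<in> A \<longleftrightarrow> y \<in> A"
  show "\<forall>A\<in>sigma_sets \<Omega> G. x \<in> A \<longleftrightarrow> y \<in> A"
  proof
    fix A assume "A \<in> sigma_sets \<Omega> G"
    then show "x \<in> A \<longleftrightarrow> y \<in> A"
    proof induction
      case (Compl A)
      then show ?case using assms by blast
    qed (use agree in auto)
  qed
qed auto

lemma return_eq_return_iff:
  assumes "x \<in> space M" "y \<in> space M"
  shows "return M x = return M y \<longleftrightarrow> (\<forall>A\<in>sets M. x \<in> A \<longleftrightarrow> y \<in> A)"
proof
  assume "return M x = return M y"
  then have "indicator A x = (indicator A y :: ennreal)" if "A \<in> sets M" for A
    using emeasure_return[OF that] by metis
  then show "\<forall>A\<in>sets M. x \<in> A \<longleftrightarrow> y \<in> A"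
    by (metis indicator_eq_0_iff)
next
  assume "\<forall>A\<in>sets M. x \<in> A \<longleftrightarrow> y \<in> A"
  then show "return M x = return M y"
    by (intro measure_eqI) (auto simp: emeasure_return indicator_def)
qed

lemma pair_measure_points_agree_iff:
  assumes "p \<in> space (M \<Otimes>\<^sub>M N)" "q \<in> space (M \<Otimes>\<^sub>M N)"
  shows "(\<forall>C\<in>sets (M \<Otimes>\<^sub>M N). p \<in> C \<longleftrightarrow> q \<in> C) \<longleftrightarrow>
    (\<forall>A\<in>sets M. fst p \<in> A \<longleftrightarrow> fst q \<in> A) \<and> (\<forall>B\<in>sets N. snd p \<in> B \<longleftrightarrow> snd q \<in> B)"
proof -
  have p: "fst p \<in> space M" "snd p \<in> space N" and q: "fst q \<in> space M" "snd q \<in> space N"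
    using assms by (auto simp: space_pair_measure)
  have "(\<forall>C\<in>sets (M \<Otimes>\<^sub>M N). p \<in> C \<longleftrightarrow> q \<in> C) \<longleftrightarrow>
      (\<forall>C\<in>{A \<times> B | A B. A \<in> sets M \<and> B \<in> sets N}. p \<in> C \<longleftrightarrow> q \<in> C)"
    unfolding sets_pair_measure
    by (rule sigma_sets_points_agree_iff) (use assms in \<open>simp_all add: space_pair_measure\<close>)
  also have "\<dots> \<longleftrightarrow> (\<forall>A\<in>sets M. \<forall>B\<in>sets N. p \<in> A \<times> B \<longleftrightarrow> q \<in> A \<times> B)"
    by blast
  also have "\<dots> \<longleftrightarrow> (\<forall>A\<in>sets M. fst p \<in> A \<longleftrightarrow> fst q \<in> A) \<and> (\<forall>B\<in>sets N. snd p \<in> B \<longleftrightarrow> snd q \<in> B)"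
  proof (rule iffI; intro conjI ballI)
    assume rect: "\<forall>A\<in>sets M. \<forall>B\<in>sets N. p \<in> A \<times> B \<longleftrightarrow> q \<in> A \<times> B"
    fix A assume "A \<in> sets M"
    with rect have "p \<in> A \<times> space N \<longleftrightarrow> q \<in> A \<times> space N"
      by blast
    then show "fst p \<in> A \<longleftrightarrow> fst q \<in> A"
      using p q by (simp add: mem_Times_iff)
  next
    assume rect: "\<forall>A\<in>sets M. \<forall>B\<in>sets N. p \<in> A \<times> B \<longleftrightarrow> q \<in> A \<times> B"
    fix B assume "B \<in> sets N"
    with rect have "p \<in> space M \<times> B \<longleftrightarrow> q \<in> space M \<times> B"
      by blast
    then show "snd p \<in> B \<longleftrightarrow> snd q \<in> B"
      using p q by (simp add: mem_Times_iff)
  next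
    fix A B assume "A \<in> sets M" "B \<in> sets N"
      and "(\<forall>A\<in>sets M. fst p \<in> A \<longleftrightarrow> fst q \<in> A) \<and> (\<forall>B\<in>sets N. snd p \<in> B \<longleftrightarrow> snd q \<in> B)"
    then show "p \<in> A \<times> B \<longleftrightarrow> q \<in> A \<times> B"
      by (simp add: mem_Times_iff)
  qed
  finally show ?thesis .
qed

lemma PiM_points_agree_iff:
  assumes "x \<in> space (\<Pi>\<^sub>M i\<in>I. M i)" "y \<in> space (\<Pi>\<^sub>M i\<in>I. M i)"
  shows "(\<forall>A\<in>sets (\<Pi>\<^sub>M i\<in>I. M i). x \<in> A \<longleftrightarrow> y \<in> A) \<longleftrightarrow>
    (\<forall>i\<in>I. \<forall>B\<in>sets (M i). x i \<in> B \<longleftrightarrow> y i \<in> B)"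
proof -
  have "(\<forall>A\<in>sets (\<Pi>\<^sub>M i\<in>I. M i). x \<in> A \<longleftrightarrow> y \<in> A) \<longleftrightarrow>
      (\<forall>A\<in>{{\<omega> \<in> space (\<Pi>\<^sub>M i\<in>I. M i). \<omega> i \<in> B} | i B. i \<in> I \<and> B \<in> sets (M i)}.
        x \<in> A \<longleftrightarrow> y \<in> A)"
    unfolding sets_PiM_single space_PiM
    by (rule sigma_sets_points_agree_iff) (use assms in \<open>simp_all add: space_PiM\<close>)
  then show ?thesis
    using assms by auto
qed

lemma prod_emb_eq_initial_cylinder:
  fixes J :: "nat set"
  assumes "finite J" "n > Max (insert 0 J)"
  shows "prod_emb UNIV (\<lambda>_. M) J (Pi\<^sub>E J A) =
    {\<omega> \<in> space (\<Pi>\<^sub>M i\<in>UNIV. M). \<forall>i<n. \<omega> i \<in> (if i \<in> J then A i else space M)}"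
proof -
  have "i \<in> J \<Longrightarrow> i < n" for i
    using assms by (meson Max_ge finite_insert insertCI le_less_trans)
  then show ?thesis
    by (auto simp: prod_emb_def space_PiM PiE_iff)
qed

lemma measure_eqI_PiM_initial_cylinders:
  fixes P P' :: "(nat \<Rightarrow> 'a) measure"
  assumes "sets P = sets (\<Pi>\<^sub>M i\<in>UNIV. M)" "sets P' = sets (\<Pi>\<^sub>M i\<in>UNIV. M)" "finite_measure P"
    and eq: "\<And>n B. (\<And>i. i < n \<Longrightarrow> B i \<in> sets M) \<Longrightarrow>
      emeasure P {\<omega> \<in> space (\<Pi>\<^sub>M i\<in>UNIV. M). \<forall>i<n. \<omega> i \<in> B i} =
      emeasure P' {\<omega> \<in> space (\<Pi>\<^sub>M i\<in>UNIV. M). \<forall>i<n. \<omega> i \<in> B i}"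
  shows "P = P'"
  using assms(1-2)
proof (rule measure_eqI_PiM_infinite)
  fix J :: "nat set" and A assume J: "finite J" "\<And>i. i \<in> J \<Longrightarrow> A i \<in> sets M"
  define B where "B i = (if i \<in> J then A i else space M)" for i
  have cylinder: "prod_emb UNIV (\<lambda>_. M) J (Pi\<^sub>E J A) =
      {\<omega> \<in> space (\<Pi>\<^sub>M i\<in>UNIV. M). \<forall>i<Suc (Max (insert 0 J)). \<omega> i \<in> B i}"
    unfolding B_def using J(1) by (rule prod_emb_eq_initial_cylinder) simp
  have "B i \<in> sets M" for i
    using J(2) by (simp add: B_def)
  then show "emeasure P (prod_emb UNIV (\<lambda>_. M) J (Pi\<^sub>E J A)) =
      emeasure P' (prod_emb UNIV (\<lambda>_. M) J (Pi\<^sub>E J A))"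
    unfolding cylinder by (rule eq)
qed fact

lemma G_T_eqI:
  assumes P: "prob_space P" "sets P = sets (\<Pi>\<^sub>M i\<in>UNIV. D)"
    and marginals: "\<And>n B. (\<forall>i<n. B i \<in> sets D) \<Longrightarrow>
      emeasure P {\<omega> \<in> space (\<Pi>\<^sub>M i\<in>UNIV. D). \<forall>i<n. \<omega> i \<in> B i} = gen_P Q T \<mu> n B"
  shows "G_T Q T D \<mu> = P"
  unfolding G_T_def
proof (rule the_equality)
  fix P' assume "prob_space P' \<and> sets P' = sets (\<Pi>\<^sub>M i\<in>UNIV. D) \<and>
    (\<forall>n B. (\<forall>i<n. B i \<in> sets D) \<longrightarrow>
      emeasure P' {\<omega> \<in> space (\<Pi>\<^sub>M i\<in>UNIV. D). \<forall>i<n. \<omega> i \<in> B i} = gen_P Q T \<mu> n B)"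
  then have P': "prob_space P'" "sets P' = sets (\<Pi>\<^sub>M i\<in>UNIV. D)"
    and marginals': "\<And>n B. (\<forall>i<n. B i \<in> sets D) \<Longrightarrow>
      emeasure P' {\<omega> \<in> space (\<Pi>\<^sub>M i\<in>UNIV. D). \<forall>i<n. \<omega> i \<in> B i} = gen_P Q T \<mu> n B"
    by blast+
  show "P' = P"
  proof (rule measure_eqI_PiM_initial_cylinders[OF P'(2) P(2)])
    show "finite_measure P'"
      using P'(1) by (rule prob_space.finite_measure)
  next
    fix n and B :: "nat \<Rightarrow> _" assume "\<And>i. i < n \<Longrightarrow> B i \<in> sets D"
    then have "\<forall>i<n. B i \<in> sets D" by blast
    then show "emeasure P' {\<omega> \<in> space (\<Pi>\<^sub>M i\<in>UNIV. D). \<forall>i<n. \<omega> i \<in> B i} =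
        emeasure P {\<omega> \<in> space (\<Pi>\<^sub>M i\<in>UNIV. D). \<forall>i<n. \<omega> i \<in> B i}"
      by (simp only: marginals marginals')
  qed
qed (simp add: P marginals)

lemma measurable_Pair_iff:
  "(\<lambda>x. (f x, g x)) \<in> M \<rightarrow>\<^sub>M N \<Otimes>\<^sub>M P \<longleftrightarrow> f \<in> M \<rightarrow>\<^sub>M N \<and> g \<in> M \<rightarrow>\<^sub>M P"
  using measurable_fst'[of "\<lambda>x. (f x, g x)" M N P] measurable_snd'[of "\<lambda>x. (f x, g x)" M N P]
  by (auto intro: measurable_Pair)

lemma sets_Collect_all_less:
  fixes n :: nat
  assumes "\<And>i. i < n \<Longrightarrow> \<phi> i \<in> M \<rightarrow>\<^sub>M N" "\<And>i. i < n \<Longrightarrow> B i \<in> sets N"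
  shows "{x \<in> space M. \<forall>i<n. \<phi> i x \<in> B i} \<in> sets M"
proof -
  have "{x \<in> space M. \<forall>i\<in>{..<n}. \<phi> i x \<in> B i} \<in> sets M"
  proof (rule sets.sets_Collect_finite_All)
    fix i assume "i \<in> {..<n}"
    then have "\<phi> i -` B i \<inter> space M \<in> sets M"
      using assms by (simp add: measurable_sets)
    moreover have "\<phi> i -` B i \<inter> space M = {x \<in> space M. \<phi> i x \<in> B i}"
      by blast
    ultimately show "{x \<in> space M. \<phi> i x \<in> B i} \<in> sets M"
      by (simp only:)
  qed (rule finite_lessThan)
  then show ?thesis
    unfolding Ball_def lessThan_iff .
qed

lemma sets_pair_measure_subset:
  assumes "sets M' \<subseteq> sets M" "space M' = space M"
  shows "sets (M' \<Otimes>\<^sub>M N) \<subseteq> sets (M \<Otimes>\<^sub>M N)"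
  unfolding sets_pair_measure assms(2) using assms(1) by (intro sigma_sets_mono') auto

locale deterministic_generator =
  fixes Q :: "'q measure" and D :: "'d measure"
    and f :: "'q \<Rightarrow> 'q" and g :: "'q \<Rightarrow> 'd" and T :: "'q \<Rightarrow> ('q \<times> 'd) measure"
  assumes f_measurable: "f \<in> Q \<rightarrow>\<^sub>M Q" and g_measurable: "g \<in> Q \<rightarrow>\<^sub>M D"
    and T_eq_return: "\<And>x. T x = return (Q \<Otimes>\<^sub>M D) (f x, g (f x))"
begin

text \<open>Index \<open>i\<close> carries the output \<open>y\<^sub>i\<^sub>+\<^sub>1\<close>, shifted as in \<^const>\<open>gen_P\<close>.\<close>
definition output_seq :: "'q \<Rightarrow> nat \<Rightarrow> 'd" where
  "output_seq x i = g ((f ^^ Suc i) x)"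

lemma output_seq_0: "output_seq x 0 = g (f x)"
  by (simp add: output_seq_def)

lemma output_seq_Suc: "output_seq x (Suc i) = output_seq (f x) i"
  unfolding output_seq_def by (simp only: funpow_Suc_right comp_def)

lemma measurable_output_seq: "(\<lambda>x. output_seq x i) \<in> Q \<rightarrow>\<^sub>M D"
  unfolding output_seq_def using measurable_comp[OF measurable_compose_n[OF f_measurable] g_measurable]
  by (simp only: comp_def)

lemma output_seq_in_space: "x \<in> space Q \<Longrightarrow> output_seq x \<in> space (\<Pi>\<^sub>M i\<in>UNIV. D)"
  using measurable_space[OF measurable_output_seq] by (auto simp: space_PiM)

lemma output_seq_cylinder_in_sets:
  assumes "\<forall>i<n. B i \<in> sets D"
  shows "{x \<in> space Q. \<forall>i<n. output_seq x i \<in> B i} \<in> sets Q"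
  by (rule sets_Collect_all_less[OF measurable_output_seq]) (use assms in auto)

definition output_generators :: "'q set set" where
  "output_generators = {(\<lambda>x. output_seq x i) -` B \<inter> space Q | i B. B \<in> sets D}"

definition output_algebra :: "'q set set" where
  "output_algebra = sigma_sets (space Q) output_generators"

lemma output_generators_subset_sets: "output_generators \<subseteq> sets Q"
  unfolding output_generators_def using measurable_output_seq by (auto intro: measurable_sets)

lemma sigma_algebra_output_algebra: "sigma_algebra (space Q) output_algebra"
  unfolding output_algebra_def using output_generators_subset_sets sets.sets_into_space
  by (intro sigma_algebra_sigma_sets) blast

lemma sets_sigma_output_algebra: "sets (sigma (space Q) output_algebra) = output_algebra"
  using sigma_algebra_output_algebra by (rule sigma_algebra.sets_measure_of_eq)

lemma emeasure_T: "C \<in> sets (Q \<Otimes>\<^sub>M D) \<Longrightarrow> emeasure (T x) C = indicator C (f x, g (f x))"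
  by (simp add: T_eq_return)

lemma sigma_admissible_iff_measurable:
  "sigma_admissible Q T D A \<longleftrightarrow> sigma_algebra (space Q) A \<and> A \<subseteq> sets Q \<and>
     f \<in> sigma (space Q) A \<rightarrow>\<^sub>M sigma (space Q) A \<and> (\<lambda>x. g (f x)) \<in> sigma (space Q) A \<rightarrow>\<^sub>M D"
proof -
  have "(\<forall>C \<in> sets (sigma (space Q) A \<Otimes>\<^sub>M D).
          (\<lambda>x. emeasure (T x) C) \<in> borel_measurable (sigma (space Q) A)) \<longleftrightarrow>
        (\<lambda>x. (f x, g (f x))) \<in> sigma (space Q) A \<rightarrow>\<^sub>M sigma (space Q) A \<Otimes>\<^sub>M D"
    if A: "sigma_algebra (space Q) A" "A \<subseteq> sets Q"
  proof -
    have sets_A: "sets (sigma (space Q) A) = A"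
      using A(1) by (rule sigma_algebra.sets_measure_of_eq)
    have sets_le: "sets (sigma (space Q) A \<Otimes>\<^sub>M D) \<subseteq> sets (Q \<Otimes>\<^sub>M D)"
      using A(2) by (intro sets_pair_measure_subset) (simp_all add: sets_A space_measure_of_conv)
    have "(\<lambda>x. emeasure (T x) C) \<in> borel_measurable (sigma (space Q) A) \<longleftrightarrow>
        (\<lambda>x. (f x, g (f x))) -` C \<inter> space Q \<in> A"
      if "C \<in> sets (sigma (space Q) A \<Otimes>\<^sub>M D)" for C
    proof -
      have "C \<in> sets (Q \<Otimes>\<^sub>M D)"
        using sets_le that by blast
      then have "(\<lambda>x. emeasure (T x) C) = indicator ((\<lambda>x. (f x, g (f x))) -` C)"
        by (simp add: emeasure_T fun_eq_iff split: split_indicator)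
      then show ?thesis
        by (simp add: borel_measurable_indicator_iff sets_A space_measure_of_conv)
    qed
    moreover have "(\<lambda>x. (f x, g (f x))) \<in> space Q \<rightarrow> space (sigma (space Q) A \<Otimes>\<^sub>M D)"
      using measurable_space[OF f_measurable] measurable_space[OF g_measurable]
      by (auto simp: space_pair_measure space_measure_of_conv)
    ultimately show ?thesis
      unfolding measurable_def sets_A space_measure_of_conv by blast
  qed
  then show ?thesis
    unfolding sigma_admissible_def measurable_Pair_iff by blast
qed

lemma f_measurable_output_algebra:
  "f \<in> sigma (space Q) output_algebra \<rightarrow>\<^sub>M sigma (space Q) output_algebra"
proof (rule measurable_sigma_sets)
  show "sets (sigma (space Q) output_algebra) = sigma_sets (space Q) output_generators"
    unfolding sets_sigma_output_algebra by (simp only: output_algebra_def)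
  show "output_generators \<subseteq> Pow (space Q)"
    using output_generators_subset_sets sets.sets_into_space by blast
  show "f \<in> space (sigma (space Q) output_algebra) \<rightarrow> space Q"
    using measurable_space[OF f_measurable] by (auto simp: space_measure_of_conv)
  fix S assume "S \<in> output_generators"
  then obtain i B where "S = (\<lambda>x. output_seq x i) -` B \<inter> space Q" "B \<in> sets D"
    unfolding output_generators_def by blast
  then have "f -` S \<inter> space (sigma (space Q) output_algebra) = (\<lambda>x. output_seq x (Suc i)) -` B \<inter> space Q"
    using measurable_space[OF f_measurable] by (auto simp: output_seq_Suc space_measure_of_conv)
  also have "\<dots> \<in> sets (sigma (space Q) output_algebra)"
    unfolding sets_sigma_output_algebra unfolding output_algebra_def output_generators_def
    by (rule sigma_sets.Basic) (use \<open>B \<in> sets D\<close> in blast)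
  finally show "f -` S \<inter> space (sigma (space Q) output_algebra) \<in> sets (sigma (space Q) output_algebra)" .
qed

lemma first_output_measurable_output_algebra:
  "(\<lambda>x. g (f x)) \<in> sigma (space Q) output_algebra \<rightarrow>\<^sub>M D"
proof (rule measurableI)
  show "g (f x) \<in> space D" if "x \<in> space (sigma (space Q) output_algebra)" for x
    using that measurable_space[OF f_measurable] measurable_space[OF g_measurable]
    by (auto simp: space_measure_of_conv)
  fix B assume "B \<in> sets D"
  have "(\<lambda>x. output_seq x 0) -` B \<inter> space Q \<in> output_algebra"
    unfolding output_algebra_def output_generators_def
    by (rule sigma_sets.Basic) (use \<open>B \<in> sets D\<close> in blast)
  then show "(\<lambda>x. g (f x)) -` B \<inter> space (sigma (space Q) output_algebra) \<in> sets (sigma (space Q) output_algebra)"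
    by (simp add: output_seq_0 sets_sigma_output_algebra space_measure_of_conv)
qed

lemma output_algebra_admissible: "sigma_admissible Q T D output_algebra"
proof -
  have "output_algebra \<subseteq> sets Q"
    unfolding output_algebra_def using output_generators_subset_sets by (rule sets.sigma_sets_subset)
  then show ?thesis
    using sigma_algebra_output_algebra f_measurable_output_algebra first_output_measurable_output_algebra
    by (simp add: sigma_admissible_iff_measurable)
qed

lemma output_algebra_subset_admissible:
  assumes "sigma_admissible Q T D A"
  shows "output_algebra \<subseteq> A"
proof -
  let ?M = "sigma (space Q) A"
  have A: "sigma_algebra (space Q) A" and f: "f \<in> ?M \<rightarrow>\<^sub>M ?M" and gf: "(\<lambda>x. g (f x)) \<in> ?M \<rightarrow>\<^sub>M D"
    using assms by (simp_all add: sigma_admissible_iff_measurable)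
  have "(\<lambda>x. output_seq x i) \<in> ?M \<rightarrow>\<^sub>M D" for i
    using measurable_comp[OF measurable_compose_n[OF f, of i] gf]
    unfolding output_seq_def by (simp only: comp_def funpow.simps(2))
  then have "output_generators \<subseteq> A"
    unfolding output_generators_def using sigma_algebra.sets_measure_of_eq[OF A]
    by (force simp: space_measure_of_conv dest: measurable_sets)
  then show ?thesis
    unfolding output_algebra_def by (rule sigma_algebra.sigma_sets_subset[OF A])
qed

lemma sigma_Q_eq_output_algebra: "sigma_Q Q T D = output_algebra"
  unfolding sigma_Q_def
  using output_algebra_admissible output_algebra_subset_admissible
  by (intro the_equality) (auto intro: subset_antisym)

lemma gen_W_eq_indicator:
  assumes "x \<in> space Q" "\<forall>i<n. B i \<in> sets D"
  shows "gen_W (space Q) T n B x = indicator {y \<in> space Q. \<forall>i<n. output_seq y i \<in> B i} x"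
  using assms
proof (induction n arbitrary: B x)
  case 0
  then show ?case by simp
next
  case (Suc n)
  let ?C = "{y \<in> space Q. \<forall>i<n. output_seq y i \<in> B (Suc i)}"
  have C: "?C \<times> B 0 \<in> sets (Q \<Otimes>\<^sub>M D)"
    using Suc.prems(2) by (intro pair_measureI output_seq_cylinder_in_sets) auto
  have "gen_W (space Q) T (Suc n) B x = (\<integral>\<^sup>+z. indicator (?C \<times> B 0) z \<partial>T x)"
  proof (simp, rule nn_integral_cong)
    fix z assume "z \<in> space (T x)"
    then have "fst z \<in> space Q"
      by (auto simp: T_eq_return space_pair_measure)
    then show "indicator (space Q \<times> B 0) z * gen_W (space Q) T n (\<lambda>i. B (Suc i)) (fst z) =
        indicator (?C \<times> B 0) z"
      using Suc.prems(2) by (simp add: Suc.IH indicator_def mem_Times_iff)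
  qed
  also have "\<dots> = emeasure (T x) (?C \<times> B 0)"
    using C by (intro nn_integral_indicator) (simp only: T_eq_return sets_return)
  also have "\<dots> = indicator (?C \<times> B 0) (f x, g (f x))"
    using C by (rule emeasure_T)
  also have "\<dots> = indicator {y \<in> space Q. \<forall>i<Suc n. output_seq y i \<in> B i} x"
    using Suc.prems(1) measurable_space[OF f_measurable]
    by (auto simp: indicator_def output_seq_0 output_seq_Suc All_less_Suc2)
  finally show ?case .
qed

lemma gen_P_return:
  assumes "x \<in> space Q" "\<forall>i<n. B i \<in> sets D"
  shows "gen_P Q T (return Q x) n B = indicator {y \<in> space Q. \<forall>i<n. output_seq y i \<in> B i} x"
proof -
  let ?C = "{y \<in> space Q. \<forall>i<n. output_seq y i \<in> B i}"
  have "gen_P Q T (return Q x) n B = (\<integral>\<^sup>+y. indicator ?C y \<partial>return Q x)"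
    unfolding gen_P_def using assms(2) by (intro nn_integral_cong) (simp add: gen_W_eq_indicator)
  also have "\<dots> = emeasure (return Q x) ?C"
    using output_seq_cylinder_in_sets[OF assms(2)] by (intro nn_integral_indicator) (simp only: sets_return)
  also have "\<dots> = indicator ?C x"
    using output_seq_cylinder_in_sets[OF assms(2)] by (rule emeasure_return)
  finally show ?thesis .
qed

lemma G_T_return:
  assumes "x \<in> space Q"
  shows "G_T Q T D (return Q x) = return (\<Pi>\<^sub>M i\<in>UNIV. D) (output_seq x)"
proof (rule G_T_eqI)
  show "prob_space (return (\<Pi>\<^sub>M i\<in>UNIV. D) (output_seq x))"
    using assms by (intro prob_space_return output_seq_in_space)
  fix n and B :: "nat \<Rightarrow> 'd set" assume B: "\<forall>i<n. B i \<in> sets D"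
  let ?C = "{\<omega> \<in> space (\<Pi>\<^sub>M i\<in>UNIV. D). \<forall>i<n. \<omega> i \<in> B i}"
  have "?C \<in> sets (\<Pi>\<^sub>M i\<in>UNIV. D)"
    using B by (intro sets_Collect_all_less[OF measurable_component_singleton]) auto
  then have "emeasure (return (\<Pi>\<^sub>M i\<in>UNIV. D) (output_seq x)) ?C = indicator ?C (output_seq x)"
    by (rule emeasure_return)
  also have "\<dots> = indicator {y \<in> space Q. \<forall>i<n. output_seq y i \<in> B i} x"
    using assms output_seq_in_space[OF assms] by (simp add: indicator_def)
  also have "\<dots> = gen_P Q T (return Q x) n B"
    using gen_P_return[OF assms B] by (rule sym)
  finally show "emeasure (return (\<Pi>\<^sub>M i\<in>UNIV. D) (output_seq x)) ?C = gen_P Q T (return Q x) n B" .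
qed simp

lemma G_T_return_eq_iff:
  assumes "x1 \<in> space Q" "x2 \<in> space Q"
  shows "G_T Q T D (return Q x1) = G_T Q T D (return Q x2) \<longleftrightarrow>
    (\<forall>i. \<forall>B\<in>sets D. output_seq x1 i \<in> B \<longleftrightarrow> output_seq x2 i \<in> B)"
  using output_seq_in_space[OF assms(1)] output_seq_in_space[OF assms(2)]
  unfolding G_T_return[OF assms(1)] G_T_return[OF assms(2)]
  by (simp add: return_eq_return_iff PiM_points_agree_iff)

lemma T_agree_iff_output_seq_agree:
  assumes x1: "x1 \<in> space Q" and x2: "x2 \<in> space Q"
  shows "(\<forall>C\<in>sets (sigma (space Q) output_algebra \<Otimes>\<^sub>M D). emeasure (T x1) C = emeasure (T x2) C) \<longleftrightarrow>
    (\<forall>i. \<forall>B\<in>sets D. output_seq x1 i \<in> B \<longleftrightarrow> output_seq x2 i \<in> B)"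
proof -
  let ?M = "sigma (space Q) output_algebra"
  have fx: "f x1 \<in> space Q" "f x2 \<in> space Q"
    using x1 x2 measurable_space[OF f_measurable] by auto
  then have hx: "(f x1, g (f x1)) \<in> space (?M \<Otimes>\<^sub>M D)" "(f x2, g (f x2)) \<in> space (?M \<Otimes>\<^sub>M D)"
    using measurable_space[OF g_measurable] by (auto simp: space_pair_measure space_measure_of_conv)
  have sets_le: "sets (?M \<Otimes>\<^sub>M D) \<subseteq> sets (Q \<Otimes>\<^sub>M D)"
    using output_algebra_admissible
    by (intro sets_pair_measure_subset) (auto simp: sets_sigma_output_algebra space_measure_of_conv sigma_admissible_def)
  have "emeasure (T x1) C = emeasure (T x2) C \<longleftrightarrow> ((f x1, g (f x1)) \<in> C \<longleftrightarrow> (f x2, g (f x2)) \<in> C)"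
    if "C \<in> sets (?M \<Otimes>\<^sub>M D)" for C
  proof -
    have "C \<in> sets (Q \<Otimes>\<^sub>M D)"
      using sets_le that by blast
    then show ?thesis
      unfolding emeasure_T[OF \<open>C \<in> sets (Q \<Otimes>\<^sub>M D)\<close>] by (simp split: split_indicator)
  qed
  then have "(\<forall>C\<in>sets (?M \<Otimes>\<^sub>M D). emeasure (T x1) C = emeasure (T x2) C) \<longleftrightarrow>
      (\<forall>C\<in>sets (?M \<Otimes>\<^sub>M D). (f x1, g (f x1)) \<in> C \<longleftrightarrow> (f x2, g (f x2)) \<in> C)"
    by blast
  also have "\<dots> \<longleftrightarrow> (\<forall>A\<in>output_algebra. f x1 \<in> A \<longleftrightarrow> f x2 \<in> A) \<and>
      (\<forall>B\<in>sets D. g (f x1) \<in> B \<longleftrightarrow> g (f x2) \<in> B)"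
    using pair_measure_points_agree_iff[OF hx] by (simp add: sets_sigma_output_algebra)
  also have "\<dots> \<longleftrightarrow> (\<forall>i. \<forall>B\<in>sets D. output_seq x1 (Suc i) \<in> B \<longleftrightarrow> output_seq x2 (Suc i) \<in> B) \<and>
      (\<forall>B\<in>sets D. output_seq x1 0 \<in> B \<longleftrightarrow> output_seq x2 0 \<in> B)"
    unfolding output_algebra_def sigma_sets_points_agree_iff[OF fx] output_generators_def
    using fx by (auto simp: output_seq_0 output_seq_Suc)
  also have "\<dots> \<longleftrightarrow> (\<forall>i. \<forall>B\<in>sets D. output_seq x1 i \<in> B \<longleftrightarrow> output_seq x2 i \<in> B)"
    by (metis nat.exhaust)
  finally show ?thesis .
qed

end

theorem corollary4p7:
  fixes Q :: "'q measure" and D :: "'d measure"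
    and f :: "'q \<Rightarrow> 'q" and g :: "'q \<Rightarrow> 'd" and T :: "'q \<Rightarrow> ('q \<times> 'd) measure"
    and x1 x2 :: 'q
  assumes f: "f \<in> Q \<rightarrow>\<^sub>M Q" and g: "g \<in> Q \<rightarrow>\<^sub>M D"
    and T_def: "\<And>x. T x = return (Q \<Otimes>\<^sub>M D) (f x, g (f x))"
    and x1: "x1 \<in> space Q" and x2: "x2 \<in> space Q"
  shows "G_T Q T D (return Q x1) = G_T Q T D (return Q x2) \<longleftrightarrow>
         (\<forall>C \<in> sets (sigma (space Q) (sigma_Q Q T D) \<Otimes>\<^sub>M D). emeasure (T x1) C = emeasure (T x2) C)"
proof -
  interpret deterministic_generator Q D f g T
    using f g T_def by unfold_locales
  show ?thesis
    unfolding sigma_Q_eq_output_algebra G_T_return_eq_iff[OF x1 x2] T_agree_iff_output_seq_agree[OF x1 x2] ..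
qed

end
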